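(* Let $n\equiv 0\pmod 4$, $n\ge 4$. Let $w:=e_0e_1\cdots e_n\in \mathrm{C}^{0,n+1}$ (central, $w^2=1$), $\hbar_\pm:=\tfrac{1\pm w}{2}$, and let $\tau$ be the algebra automorphism of $\mathrm{C}^{0,n+1}$ with $\tau(e_i)=-e_i$ for all $i$. Choose a primitive idempotent $\wp_+\in\mathrm{C}^{0,n+1}\hbar_+$ and put $\wp_-:=\tau(\wp_+)$, $E_\pm:=\mathrm{C}^{0,n+1}\wp_\pm$, and $P_n^\pm:=\ker(\Phi:A_n\otimes_\mathbb{R}E_\pm\to A_n\otimes_\mathbb{R}E_\pm)$. Then the orthogonal sum $(P_n^+,\hat\beta|_{P_n^+})\perp(P_n^-,\hat\beta|_{P_n^-})$ is isometric to the trivial form $N\langle 1\rangle$ over $S^n=\operatorname{Spec}A_n$, where $N=\dim_\mathbb{R}E_+$ $(=2^{\delta(n+1)})$.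
   Context: $A_n:=\mathbb{R}[x_0,\dots,x_n]/(\sum_i x_i^2-1)$. $\mathrm{C}^{0,n+1}$ is the real Clifford algebra on $e_0,\dots,e_n$ with $e_i^2=1$, $e_ie_j=-e_je_i$ ($i\ne j$). $\Phi$ is left multiplication by $\tfrac12(1+\sum_i x_i\otimes e_i)$ on $A_n\otimes_\mathbb{R}E_\pm$. $\sigma$ is the reversing involution ($\sigma(e_i)=e_i$, $\sigma(xy)=\sigma(y)\sigma(x)$), $\beta(x,y)=\operatorname{Tr}(\sigma(x)y)$ the trace form, and $\hat\beta(a\otimes x,b\otimes y)=ab\,\beta(x,y)$. $\langle 1\rangle$ is the unit symmetric form on $A_n$. $\delta(k)$ is the integer with $2^{\delta(k)}$ the real dimension of an irreducible module over the Clifford algebra $\mathrm{C}^{k-1,0}$. *)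

theory Defs
  imports Complex_Main
begin

text \<open>A_n = R[x_0..x_n]/(sum x_i^2 - 1) is realised as the ring of polynomial
  functions on the sphere S^n (extensionally zero off the sphere).\<close>

definition sph :: "nat \<Rightarrow> (nat \<Rightarrow> real) set" where
  "sph n = {x. (\<forall>i>n. x i = 0) \<and> (\<Sum>i\<le>n. (x i)^2) = 1}"

inductive_set polyfun :: "nat \<Rightarrow> ((nat \<Rightarrow> real) \<Rightarrow> real) set" for n where
  pf_const: "(\<lambda>x. c) \<in> polyfun n"
| pf_var: "i \<le> n \<Longrightarrow> (\<lambda>x. x i) \<in> polyfun n"
| pf_add: "p \<in> polyfun n \<Longrightarrow> q \<in> polyfun n \<Longrightarrow> (\<lambda>x. p x + q x) \<in> polyfun n"
| pf_mult: "p \<in> polyfun n \<Longrightarrow> q \<in> polyfun n \<Longrightarrow> (\<lambda>x. p x * q x) \<in> polyfun n"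

definition An :: "nat \<Rightarrow> ((nat \<Rightarrow> real) \<Rightarrow> real) set" where
  "An n = {f. \<exists>p\<in>polyfun n. f = (\<lambda>x. if x \<in> sph n then p x else 0)}"

definition An_pow :: "nat \<Rightarrow> nat \<Rightarrow> (nat \<Rightarrow> (nat \<Rightarrow> real) \<Rightarrow> real) set" where
  "An_pow n N = {v. (\<forall>i<N. v i \<in> An n) \<and> (\<forall>i\<ge>N. v i = (\<lambda>x. 0))}"

text \<open>An element is given by its coordinates w.r.t. the basis e_S = e_{s_1}...e_{s_k}
  (s_1 < ... < s_k), S a subset of {0..n}.\<close>
type_synonym cl = "nat set \<Rightarrow> real"

definition Cl :: "nat \<Rightarrow> cl set" where
  "Cl n = {a. \<forall>S. \<not> S \<subseteq> {..n} \<longrightarrow> a S = 0}"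

definition cl_zero :: cl where "cl_zero = (\<lambda>S. 0)"
definition cl_one :: cl where "cl_one = (\<lambda>S. if S = {} then 1 else 0)"
definition cl_gen :: "nat \<Rightarrow> cl" where "cl_gen i = (\<lambda>S. if S = {i} then 1 else 0)"
definition cl_basis :: "nat set \<Rightarrow> cl" where "cl_basis T = (\<lambda>S. if S = T then 1 else 0)"
definition cl_add :: "cl \<Rightarrow> cl \<Rightarrow> cl" where "cl_add a b = (\<lambda>S. a S + b S)"
definition cl_scale :: "real \<Rightarrow> cl \<Rightarrow> cl" where "cl_scale r a = (\<lambda>S. r * a S)"

text \<open>Sign of e_S e_T = sign * e_{S symdiff T} (using e_i^2 = 1, e_i e_j = - e_j e_i).\<close>
definition cl_sign :: "nat set \<Rightarrow> nat set \<Rightarrow> real" where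
  "cl_sign S T = (-1) ^ card {(s, t). s \<in> S \<and> t \<in> T \<and> t < s}"

definition cl_mult :: "nat \<Rightarrow> cl \<Rightarrow> cl \<Rightarrow> cl" where
  "cl_mult n a b = (\<lambda>U. \<Sum>S\<in>Pow {..n}. \<Sum>T\<in>Pow {..n}.
      if (S - T) \<union> (T - S) = U then cl_sign S T * a S * b T else 0)"

definition cl_w :: "nat \<Rightarrow> cl" where
  "cl_w n = foldr (cl_mult n) (map cl_gen [0..<Suc n]) cl_one"

definition hbar_plus :: "nat \<Rightarrow> cl" where
  "hbar_plus n = cl_scale (1/2) (cl_add cl_one (cl_w n))"

text \<open>tau: algebra automorphism with tau(e_i) = -e_i, i.e. (-1)^|S| on e_S.\<close>
definition cl_tau :: "cl \<Rightarrow> cl" where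
  "cl_tau a = (\<lambda>S. (-1) ^ card S * a S)"

text \<open>sigma: reversion, sigma(e_S) = (-1)^(k(k-1)/2) e_S for |S| = k.\<close>
definition cl_rev :: "cl \<Rightarrow> cl" where
  "cl_rev a = (\<lambda>S. (-1) ^ (card S * (card S - 1) div 2) * a S)"

definition cl_tr :: "nat \<Rightarrow> cl \<Rightarrow> real" where
  "cl_tr n a = (\<Sum>S\<in>Pow {..n}. cl_mult n a (cl_basis S) S)"

definition cl_beta :: "nat \<Rightarrow> cl \<Rightarrow> cl \<Rightarrow> real" where
  "cl_beta n x y = cl_tr n (cl_mult n (cl_rev x) y)"

definition is_idem :: "nat \<Rightarrow> cl \<Rightarrow> bool" where
  "is_idem n p \<longleftrightarrow> p \<in> Cl n \<and> cl_mult n p p = p"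

definition primitive_idem :: "nat \<Rightarrow> cl \<Rightarrow> bool" where
  "primitive_idem n p \<longleftrightarrow> is_idem n p \<and> p \<noteq> cl_zero \<and>
     \<not> (\<exists>q r. is_idem n q \<and> is_idem n r \<and> q \<noteq> cl_zero \<and> r \<noteq> cl_zero \<and>
            cl_mult n q r = cl_zero \<and> cl_mult n r q = cl_zero \<and> p = cl_add q r)"

definition left_ideal :: "nat \<Rightarrow> cl \<Rightarrow> cl set" where
  "left_ideal n p = {cl_mult n c p | c. c \<in> Cl n}"

definition has_real_dim :: "cl set \<Rightarrow> nat \<Rightarrow> bool" where
  "has_real_dim E N \<longleftrightarrow> (\<exists>b :: nat \<Rightarrow> cl. (\<forall>i<N. b i \<in> E) \<and>
     (\<forall>c. (\<lambda>S. \<Sum>i<N. c i * b i S) = cl_zero \<longrightarrow> (\<forall>i<N. c i = 0)) \<and>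
     (\<forall>v\<in>E. \<exists>c. v = (\<lambda>S. \<Sum>i<N. c i * b i S)))"

type_synonym sec = "(nat \<Rightarrow> real) \<Rightarrow> cl"

text \<open>A_n \<otimes>_R E as the finite sums of elementary tensors a \<otimes> v, realised as
  C-valued functions on the sphere.\<close>
definition tensA :: "nat \<Rightarrow> cl set \<Rightarrow> sec set" where
  "tensA n E = {u. \<exists>m (a :: nat \<Rightarrow> (nat \<Rightarrow> real) \<Rightarrow> real) (v :: nat \<Rightarrow> cl).
      (\<forall>k<m. a k \<in> An n \<and> v k \<in> E) \<and> u = (\<lambda>x S. \<Sum>k<m. a k x * v k S)}"

definition phi_at :: "nat \<Rightarrow> (nat \<Rightarrow> real) \<Rightarrow> cl" where
  "phi_at n x = cl_scale (1/2) (\<lambda>S. cl_one S + (\<Sum>i\<le>n. x i * cl_gen i S))"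

definition Phi :: "nat \<Rightarrow> sec \<Rightarrow> sec" where
  "Phi n u = (\<lambda>x. if x \<in> sph n then cl_mult n (phi_at n x) (u x) else cl_zero)"

definition Pker :: "nat \<Rightarrow> cl set \<Rightarrow> sec set" where
  "Pker n E = {u \<in> tensA n E. Phi n u = (\<lambda>x. cl_zero)}"

text \<open>hat beta (a \<otimes> x, b \<otimes> y) = a b beta(x,y), extended bilinearly.\<close>
definition betahat :: "nat \<Rightarrow> sec \<Rightarrow> sec \<Rightarrow> (nat \<Rightarrow> real) \<Rightarrow> real" where
  "betahat n u v = (\<lambda>x. cl_beta n (u x) (v x))"

text \<open>(M, b) (orthogonal sum of (P_+, b) and (P_-, b)) is isometric to N<1> over A_n:
  there is an A_n-linear bijection onto A_n^N carrying the form to sum_i a_i b_i.\<close>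
definition orth_sum_isometric_trivial :: "nat \<Rightarrow> sec set \<Rightarrow> sec set \<Rightarrow> nat \<Rightarrow> bool" where
  "orth_sum_isometric_trivial n Pp Pm N \<longleftrightarrow>
    (\<exists>\<Psi> :: sec \<times> sec \<Rightarrow> nat \<Rightarrow> (nat \<Rightarrow> real) \<Rightarrow> real.
       bij_betw \<Psi> (Pp \<times> Pm) (An_pow n N) \<and>
       (\<forall>z\<in>Pp \<times> Pm. \<forall>z'\<in>Pp \<times> Pm.
          \<Psi> ((\<lambda>x. cl_add (fst z x) (fst z' x)), (\<lambda>x. cl_add (snd z x) (snd z' x)))
            = (\<lambda>i x. \<Psi> z i x + \<Psi> z' i x)) \<and>
       (\<forall>a\<in>An n. \<forall>z\<in>Pp \<times> Pm.
          \<Psi> ((\<lambda>x. cl_scale (a x) (fst z x)), (\<lambda>x. cl_scale (a x) (snd z x)))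
            = (\<lambda>i x. a x * \<Psi> z i x)) \<and>
       (\<forall>z\<in>Pp \<times> Pm. \<forall>z'\<in>Pp \<times> Pm.
          (\<lambda>x. betahat n (fst z) (fst z') x + betahat n (snd z) (snd z') x)
            = (\<lambda>x. \<Sum>i<N. \<Psi> z i x * \<Psi> z' i x)))"

end

(*
  The trace form is a multiple of the standard inner product in the basis e_S,
  beta(y, z) = 2^(n+1) <y, z>.  At a point x of the sphere, Clifford multiplication by
  x = sum_i x_i e_i is a self-adjoint involution and Phi is the projection onto its
  (+1)-eigenspace, so P_n^+ consists of the (-1)-eigensections with values in E_+.
  Since tau(x y) = - x tau(y), the automorphism tau carries P_n^- onto the
  (+1)-eigensections with values in E_+.  Hence (u, u') |-> u + tau u' identifies
  P_n^+ (+) P_n^- with A_n (x) E_+, the two summands being orthogonal, and for an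
  orthonormal basis q_1, ..., q_N of E_+ the coordinates sqrt(2^(n+1)) <q_i, u + tau u'>
  give the isometry with N<1>.
*)

theory Submission
  imports Defs
begin

section \<open>Signs of Clifford monomials\<close>

definition inversions :: "nat set \<Rightarrow> nat set \<Rightarrow> (nat \<times> nat) set" where
  "inversions S T = {(s, t). s \<in> S \<and> t \<in> T \<and> t < s}"

lemma sym_diff_sym_diff [simp]: "sym_diff S (sym_diff S T) = T"
  by auto

lemma sym_diff_eq_iff: "sym_diff S T = U \<longleftrightarrow> T = sym_diff S U"
  by auto

lemma sym_diff_subset: "S \<subseteq> {..n} \<Longrightarrow> T \<subseteq> {..n} \<Longrightarrow> sym_diff S T \<subseteq> {..n}"
  by auto

lemma finite_Pow_atMost: "S \<in> Pow {..(n::nat)} \<Longrightarrow> finite S"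
  using finite_subset by blast

lemma cl_sign_inversions: "cl_sign S T = (-1) ^ card (inversions S T)"
  by (simp add: cl_sign_def inversions_def)

lemma finite_inversions: "finite S \<Longrightarrow> finite T \<Longrightarrow> finite (inversions S T)"
  by (rule finite_subset[of _ "S \<times> T"]) (auto simp: inversions_def)

lemma cl_sign_square: "cl_sign S T * cl_sign S T = 1"
  by (simp add: cl_sign_def flip: power_add)

lemma cl_sign_singleton: "cl_sign {i} {j} = (if j < i then -1 else 1)"
proof -
  have "inversions {i} {j} = (if j < i then {(i, j)} else {})"
    by (auto simp: inversions_def)
  then show ?thesis
    by (simp add: cl_sign_inversions)
qed

lemma cl_sign_Un_left:
  assumes "finite A" "finite B" "finite C" "A \<inter> B = {}"
  shows "cl_sign (A \<union> B) C = cl_sign A C * cl_sign B C"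
proof -
  have "inversions (A \<union> B) C = inversions A C \<union> inversions B C"
    and "inversions A C \<inter> inversions B C = {}"
    using assms(4) by (auto simp: inversions_def)
  then show ?thesis
    using assms by (simp add: cl_sign_inversions card_Un_disjoint finite_inversions power_add)
qed

lemma cl_sign_Un_right:
  assumes "finite A" "finite B" "finite C" "B \<inter> C = {}"
  shows "cl_sign A (B \<union> C) = cl_sign A B * cl_sign A C"
proof -
  have "inversions A (B \<union> C) = inversions A B \<union> inversions A C"
    and "inversions A B \<inter> inversions A C = {}"
    using assms(4) by (auto simp: inversions_def)
  then show ?thesis
    using assms by (simp add: cl_sign_inversions card_Un_disjoint finite_inversions power_add)
qed

lemma cl_sign_split_left:
  assumes "finite A" "finite B" "finite C"
  shows "cl_sign A C = cl_sign (A - B) C * cl_sign (A \<inter> B) C"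
proof -
  have "(A - B) \<inter> (A \<inter> B) = {}"
    by blast
  then show ?thesis
    using cl_sign_Un_left[of "A - B" "A \<inter> B" C] assms by (simp add: Un_Diff_Int)
qed

lemma cl_sign_split_right:
  assumes "finite A" "finite B" "finite C"
  shows "cl_sign A B = cl_sign A (B - C) * cl_sign A (B \<inter> C)"
proof -
  have "(B - C) \<inter> (B \<inter> C) = {}"
    by blast
  then show ?thesis
    using cl_sign_Un_right[of A "B - C" "B \<inter> C"] assms by (simp add: Un_Diff_Int)
qed

text \<open>The common part \<open>A \<inter> B\<close> contributes its sign twice, i.e. not at all.\<close>

lemma cl_sign_sym_diff_left:
  assumes "finite A" "finite B" "finite C"
  shows "cl_sign (sym_diff A B) C = cl_sign A C * cl_sign B C"
proof -
  have "cl_sign (sym_diff A B) C = cl_sign (A - B) C * cl_sign (B - A) C"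
    using cl_sign_Un_left[of "A - B" "B - A" C] assms by auto
  then show ?thesis
    using assms cl_sign_split_left[of A B C] cl_sign_split_left[of B A C]
      cl_sign_square[of "A \<inter> B" C]
    by (simp add: Int_commute algebra_simps)
qed

lemma cl_sign_sym_diff_right:
  assumes "finite A" "finite B" "finite C"
  shows "cl_sign A (sym_diff B C) = cl_sign A B * cl_sign A C"
proof -
  have "cl_sign A (sym_diff B C) = cl_sign A (B - C) * cl_sign A (C - B)"
    using cl_sign_Un_right[of A "B - C" "C - B"] assms by auto
  then show ?thesis
    using assms cl_sign_split_right[of A B C] cl_sign_split_right[of A C B]
      cl_sign_square[of A "B \<inter> C"]
    by (simp add: Int_commute algebra_simps)
qed

lemma cl_sign_cocycle:
  assumes "finite A" "finite B" "finite C"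
  shows "cl_sign A B * cl_sign (sym_diff A B) C = cl_sign A (sym_diff B C) * cl_sign B C"
  using assms by (simp add: cl_sign_sym_diff_left cl_sign_sym_diff_right algebra_simps)

lemma cl_sign_reassoc:
  assumes "finite S" "finite T" "finite U"
  shows "cl_sign (sym_diff S T) (sym_diff (sym_diff S T) U) * cl_sign S T
    = cl_sign S (sym_diff S U) * cl_sign T (sym_diff T (sym_diff S U))"
proof -
  define C where "C = sym_diff T (sym_diff S U)"
  have "sym_diff (sym_diff S T) U = C" "sym_diff S U = sym_diff T C"
    by (auto simp: C_def)
  moreover have "finite C"
    using assms by (simp add: C_def)
  ultimately show ?thesis
    using cl_sign_cocycle[of S T C] assms by (simp add: C_def[symmetric] mult.commute)
qed

section \<open>The Clifford product\<close>

lemma cl_mult_apply: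
  assumes "U \<subseteq> {..n}"
  shows "cl_mult n a b U = (\<Sum>S\<in>Pow {..n}. cl_sign S (sym_diff S U) * a S * b (sym_diff S U))"
  unfolding cl_mult_def
proof (rule sum.cong[OF refl])
  fix S assume S: "S \<in> Pow {..n}"
  have "(\<Sum>T\<in>Pow {..n}. if sym_diff S T = U then cl_sign S T * a S * b T else 0)
      = (\<Sum>T\<in>Pow {..n}. if T = sym_diff S U then cl_sign S T * a S * b T else 0)"
    by (rule sum.cong[OF refl]) (metis sym_diff_eq_iff)
  also have "\<dots> = cl_sign S (sym_diff S U) * a S * b (sym_diff S U)"
    using sym_diff_subset[of S n U] S assms by simp
  finally show "(\<Sum>T\<in>Pow {..n}. if sym_diff S T = U then cl_sign S T * a S * b T else 0)
      = cl_sign S (sym_diff S U) * a S * b (sym_diff S U)" .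
qed

lemma cl_mult_outside: "\<not> U \<subseteq> {..n} \<Longrightarrow> cl_mult n a b U = 0"
  unfolding cl_mult_def by (auto intro!: sum.neutral)

lemma cl_mult_in_Cl: "cl_mult n a b \<in> Cl n"
  by (simp add: Cl_def cl_mult_outside)

lemma cl_mult_assoc: "cl_mult n a (cl_mult n b c) = cl_mult n (cl_mult n a b) c"
proof
  fix U
  show "cl_mult n a (cl_mult n b c) U = cl_mult n (cl_mult n a b) c U"
  proof (cases "U \<subseteq> {..n}")
    case False
    then show ?thesis by (simp add: cl_mult_outside)
  next
    case U: True
    let ?P = "Pow {..n}"
    have "cl_mult n (cl_mult n a b) c U =
        (\<Sum>R\<in>?P. \<Sum>S\<in>?P. cl_sign R (sym_diff R U) * cl_sign S (sym_diff S R)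
           * a S * b (sym_diff S R) * c (sym_diff R U))"
      by (simp add: cl_mult_apply U sum_distrib_left sum_distrib_right mult.assoc)
    also have "\<dots> = (\<Sum>S\<in>?P. \<Sum>R\<in>?P. cl_sign R (sym_diff R U) * cl_sign S (sym_diff S R)
           * a S * b (sym_diff S R) * c (sym_diff R U))"
      by (rule sum.swap)
    also have "\<dots> = (\<Sum>S\<in>?P. \<Sum>T\<in>?P. cl_sign (sym_diff S T) (sym_diff (sym_diff S T) U)
           * cl_sign S T * a S * b T * c (sym_diff (sym_diff S T) U))"
    proof (rule sum.cong[OF refl])
      fix S assume "S \<in> ?P"
      then show "(\<Sum>R\<in>?P. cl_sign R (sym_diff R U) * cl_sign S (sym_diff S R)
           * a S * b (sym_diff S R) * c (sym_diff R U))
        = (\<Sum>T\<in>?P. cl_sign (sym_diff S T) (sym_diff (sym_diff S T) U)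
           * cl_sign S T * a S * b T * c (sym_diff (sym_diff S T) U))"
        by (intro sum.reindex_bij_witness[of _ "sym_diff S" "sym_diff S"]) auto
    qed
    also have "\<dots> = (\<Sum>S\<in>?P. \<Sum>T\<in>?P. cl_sign S (sym_diff S U) * a S
           * (cl_sign T (sym_diff T (sym_diff S U)) * b T * c (sym_diff T (sym_diff S U))))"
    proof (intro sum.cong refl)
      fix S T assume "S \<in> ?P" "T \<in> ?P"
      then have "cl_sign (sym_diff S T) (sym_diff (sym_diff S T) U) * cl_sign S T
          = cl_sign S (sym_diff S U) * cl_sign T (sym_diff T (sym_diff S U))"
        using U by (intro cl_sign_reassoc) (auto intro: finite_subset)
      moreover have "sym_diff (sym_diff S T) U = sym_diff T (sym_diff S U)"
        by auto
      ultimately show "cl_sign (sym_diff S T) (sym_diff (sym_diff S T) U) * cl_sign S T * a S * b T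
            * c (sym_diff (sym_diff S T) U)
          = cl_sign S (sym_diff S U) * a S
            * (cl_sign T (sym_diff T (sym_diff S U)) * b T * c (sym_diff T (sym_diff S U)))"
        by (simp add: algebra_simps)
    qed
    also have "\<dots> = cl_mult n a (cl_mult n b c) U"
    proof -
      have "sym_diff S U \<subseteq> {..n}" if "S \<in> ?P" for S
        using that U by auto
      then show ?thesis
        using U by (simp add: cl_mult_apply sum_distrib_left)
    qed
    finally show ?thesis ..
  qed
qed

lemma cl_mult_sum_left:
  "finite K \<Longrightarrow> cl_mult n (\<lambda>S. \<Sum>k\<in>K. f k S) b U = (\<Sum>k\<in>K. cl_mult n (f k) b U)"
  by (cases "U \<subseteq> {..n}")
    (simp_all add: cl_mult_apply cl_mult_outside sum_distrib_left sum_distrib_right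
      mult.assoc sum.swap[of _ K])

lemma cl_mult_sum_right:
  "finite K \<Longrightarrow> cl_mult n a (\<lambda>S. \<Sum>k\<in>K. f k S) U = (\<Sum>k\<in>K. cl_mult n a (f k) U)"
  by (cases "U \<subseteq> {..n}")
    (simp_all add: cl_mult_apply cl_mult_outside sum_distrib_left sum.swap[of _ K])

lemma cl_mult_add_left: "cl_mult n (\<lambda>S. a S + a' S) b U = cl_mult n a b U + cl_mult n a' b U"
  by (cases "U \<subseteq> {..n}")
    (simp_all add: cl_mult_apply cl_mult_outside algebra_simps sum.distrib)

lemma cl_mult_add_right: "cl_mult n a (\<lambda>S. b S + b' S) U = cl_mult n a b U + cl_mult n a b' U"
  by (cases "U \<subseteq> {..n}")
    (simp_all add: cl_mult_apply cl_mult_outside algebra_simps sum.distrib)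

lemma cl_mult_diff_right: "cl_mult n a (\<lambda>S. b S - b' S) U = cl_mult n a b U - cl_mult n a b' U"
  by (cases "U \<subseteq> {..n}")
    (simp_all add: cl_mult_apply cl_mult_outside algebra_simps sum_subtractf)

lemma cl_mult_scale_left: "cl_mult n (\<lambda>S. r * a S) b U = r * cl_mult n a b U"
  by (cases "U \<subseteq> {..n}")
    (simp_all add: cl_mult_apply cl_mult_outside algebra_simps sum_distrib_left)

lemma cl_mult_scale_right: "cl_mult n a (\<lambda>S. r * b S) U = r * cl_mult n a b U"
  by (cases "U \<subseteq> {..n}")
    (simp_all add: cl_mult_apply cl_mult_outside algebra_simps sum_distrib_left)

lemma cl_mult_zero_left: "cl_mult n (\<lambda>S. 0) b = (\<lambda>S. 0)"
  using cl_mult_scale_left[of n 0 "\<lambda>S. 0" b] by auto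

lemma cl_sign_empty_left [simp]: "cl_sign {} T = 1"
  by (simp add: cl_sign_def)

lemma cl_mult_one_left:
  assumes "y \<in> Cl n"
  shows "cl_mult n cl_one y = y"
proof
  fix U
  show "cl_mult n cl_one y U = y U"
  proof (cases "U \<subseteq> {..n}")
    case True
    have "cl_mult n cl_one y U = (\<Sum>S\<in>Pow {..n}. if S = {} then y U else 0)"
      unfolding cl_mult_apply[OF True] by (intro sum.cong) (simp_all add: cl_one_def)
    then show ?thesis
      by simp
  qed (use assms in \<open>simp add: cl_mult_outside Cl_def\<close>)
qed

lemma cl_mult_gen_apply:
  assumes "i \<le> n" "U \<subseteq> {..n}"
  shows "cl_mult n (cl_gen i) y U = cl_sign {i} (sym_diff {i} U) * y (sym_diff {i} U)"
proof -
  have "cl_mult n (cl_gen i) y U = (\<Sum>S\<in>Pow {..n}.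
      if S = {i} then cl_sign {i} (sym_diff {i} U) * y (sym_diff {i} U) else 0)"
    unfolding cl_mult_apply[OF assms(2)] by (intro sum.cong) (simp_all add: cl_gen_def)
  then show ?thesis
    using assms(1) by simp
qed

lemma cl_mult_gen_gen:
  assumes "i \<le> n" "j \<le> n"
  shows "cl_mult n (cl_gen i) (cl_gen j) U = (if U = sym_diff {i} {j} then cl_sign {i} {j} else 0)"
proof (cases "U \<subseteq> {..n}")
  case True
  have "sym_diff {i} U = {j} \<longleftrightarrow> U = sym_diff {i} {j}"
    by (metis sym_diff_eq_iff)
  moreover have "cl_mult n (cl_gen i) (cl_gen j) U = cl_sign {i} (sym_diff {i} U) * cl_gen j (sym_diff {i} U)"
    by (rule cl_mult_gen_apply[OF assms(1) True])
  ultimately show ?thesis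
    by (auto simp: cl_gen_def)
next
  case False
  then have "U \<noteq> sym_diff {i} {j}"
    using assms by auto
  with False show ?thesis
    by (simp add: cl_mult_outside)
qed

definition cl_vec :: "nat \<Rightarrow> (nat \<Rightarrow> real) \<Rightarrow> cl" where
  "cl_vec n x = (\<lambda>S. \<Sum>i\<le>n. x i * cl_gen i S)"

lemma cl_mult_vec_left: "cl_mult n (cl_vec n x) y U = (\<Sum>i\<le>n. x i * cl_mult n (cl_gen i) y U)"
  unfolding cl_vec_def by (simp add: cl_mult_sum_left cl_mult_scale_left)

lemma sum_sum_antisymmetric:
  fixes g :: "'a \<Rightarrow> 'a \<Rightarrow> real"
  assumes "finite I" and anti: "\<And>i j. i \<in> I \<Longrightarrow> j \<in> I \<Longrightarrow> i \<noteq> j \<Longrightarrow> g j i = - g i j"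
  shows "(\<Sum>i\<in>I. \<Sum>j\<in>I. g i j) = (\<Sum>i\<in>I. g i i)"
proof -
  define h where "h i j = (if i = j then 0 else g i j)" for i j
  have "(\<Sum>i\<in>I. \<Sum>j\<in>I. h i j) = (\<Sum>j\<in>I. \<Sum>i\<in>I. h i j)"
    by (rule sum.swap)
  also have "\<dots> = (\<Sum>j\<in>I. \<Sum>i\<in>I. - h j i)"
  proof (intro sum.cong refl)
    fix i j assume "i \<in> I" "j \<in> I"
    then show "h i j = - h j i"
      using anti[of j i] by (simp add: h_def)
  qed
  finally have off_diagonal: "(\<Sum>i\<in>I. \<Sum>j\<in>I. h i j) = 0"
    by (simp add: sum_negf)
  have "(\<Sum>j\<in>I. g i j) = g i i + (\<Sum>j\<in>I. h i j)" if "i \<in> I" for i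
  proof -
    have "(\<Sum>j\<in>I. g i j) = (\<Sum>j\<in>I. (if i = j then g i i else 0) + h i j)"
      by (intro sum.cong) (auto simp: h_def)
    then show ?thesis
      using that assms(1) by (simp add: sum.distrib)
  qed
  then show ?thesis
    using off_diagonal by (simp add: sum.distrib)
qed

text \<open>The off-diagonal terms cancel in pairs because \<open>e\<^sub>j e\<^sub>i = - e\<^sub>i e\<^sub>j\<close> for \<open>i \<noteq> j\<close>.\<close>

lemma cl_vec_square: "cl_mult n (cl_vec n x) (cl_vec n x) U = (\<Sum>i\<le>n. (x i)\<^sup>2) * cl_one U"
proof -
  define g where "g i j = x i * x j * (if U = sym_diff {i} {j} then cl_sign {i} {j} else 0)" for i j
  have "cl_mult n (cl_vec n x) (cl_vec n x) U
      = (\<Sum>i\<le>n. \<Sum>j\<le>n. x i * x j * cl_mult n (cl_gen i) (cl_gen j) U)"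
    unfolding cl_mult_vec_left
    by (simp add: cl_vec_def cl_mult_sum_right cl_mult_scale_right sum_distrib_left mult.assoc)
  also have "\<dots> = (\<Sum>i\<le>n. \<Sum>j\<le>n. g i j)"
    by (intro sum.cong refl) (simp add: cl_mult_gen_gen g_def)
  also have "\<dots> = (\<Sum>i\<le>n. g i i)"
  proof (rule sum_sum_antisymmetric)
    fix i j :: nat assume "i \<noteq> j"
    moreover have "sym_diff {j} {i} = sym_diff {i} {j}"
      by auto
    ultimately show "g j i = - g i j"
      by (auto simp: g_def cl_sign_singleton)
  qed simp
  also have "\<dots> = (\<Sum>i\<le>n. (x i)\<^sup>2) * cl_one U"
    by (simp add: g_def cl_one_def cl_sign_singleton power2_eq_square sum_distrib_right)
  finally show ?thesis .
qed

lemma cl_mult_vec_vec: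
  assumes "y \<in> Cl n"
  shows "cl_mult n (cl_vec n x) (cl_mult n (cl_vec n x) y) = (\<lambda>U. (\<Sum>i\<le>n. (x i)\<^sup>2) * y U)"
proof -
  have "cl_mult n (cl_vec n x) (cl_vec n x) = (\<lambda>S. (\<Sum>i\<le>n. (x i)\<^sup>2) * cl_one S)"
    using cl_vec_square by blast
  then show ?thesis
    by (intro ext) (simp add: cl_mult_assoc cl_mult_scale_left cl_mult_one_left[OF assms])
qed

section \<open>The grading automorphism\<close>

lemma neg_one_power_square: "(-1::real) ^ k * (-1) ^ k = 1"
  by (simp flip: power_mult_distrib)

lemma neg_one_power_card_sym_diff:
  assumes "finite A" "finite B"
  shows "(-1::real) ^ card (sym_diff A B) = (-1) ^ card A * (-1) ^ card B"
proof -
  have "card A = card (A - B) + card (A \<inter> B)" "card B = card (B - A) + card (A \<inter> B)"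
    using card_Int_Diff[OF assms(1), of B] card_Int_Diff[OF assms(2), of A]
    by (simp_all add: Int_commute)
  moreover have "card (sym_diff A B) = card (A - B) + card (B - A)"
    using assms by (subst card_Un_disjoint) auto
  ultimately show ?thesis
    by (simp add: power_add mult_ac neg_one_power_square)
qed

lemma cl_tau_mult: "cl_tau (cl_mult n a b) = cl_mult n (cl_tau a) (cl_tau b)"
proof
  fix U
  show "cl_tau (cl_mult n a b) U = cl_mult n (cl_tau a) (cl_tau b) U"
  proof (cases "U \<subseteq> {..n}")
    case U: True
    have sign: "(-1) ^ card U * (cl_sign S (sym_diff S U) * a S * b (sym_diff S U))
        = cl_sign S (sym_diff S U) * ((-1) ^ card S * a S) * ((-1) ^ card (sym_diff S U) * b (sym_diff S U))"
      if "S \<in> Pow {..n}" for S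
    proof -
      have "finite U"
        using U finite_subset by blast
      then have "(-1::real) ^ card (sym_diff S U) = (-1) ^ card S * (-1) ^ card U"
        using neg_one_power_card_sym_diff finite_Pow_atMost[OF that] by blast
      then show ?thesis
        using neg_one_power_square[of "card S"] by (simp add: algebra_simps)
    qed
    show ?thesis
      unfolding cl_tau_def cl_mult_apply[OF U] sum_distrib_left by (intro sum.cong refl) (rule sign)
  qed (simp add: cl_mult_outside cl_tau_def)
qed

lemma cl_tau_cl_tau [simp]: "cl_tau (cl_tau a) = a"
  by (simp add: cl_tau_def mult.assoc[symmetric] neg_one_power_square)

lemma cl_tau_in_Cl: "a \<in> Cl n \<Longrightarrow> cl_tau a \<in> Cl n"
  by (simp add: Cl_def cl_tau_def)

lemma cl_tau_linear: "cl_tau (\<lambda>S. \<Sum>k<(m::nat). c k * w k S) = (\<lambda>S. \<Sum>k<m. c k * cl_tau (w k) S)"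
  by (simp add: cl_tau_def sum_distrib_left mult_ac)

lemma cl_tau_vec: "cl_tau (cl_vec n x) = (\<lambda>S. - cl_vec n x S)"
  unfolding cl_tau_def cl_vec_def sum_distrib_left sum_negf[symmetric]
  by (intro ext sum.cong) (auto simp: cl_gen_def)

lemma cl_tau_mult_vec: "cl_tau (cl_mult n (cl_vec n x) y) = (\<lambda>U. - cl_mult n (cl_vec n x) (cl_tau y) U)"
  by (rule ext) (simp add: cl_tau_mult cl_tau_vec cl_mult_scale_left[of n "-1", simplified])

section \<open>The inner product and the trace form\<close>

definition cl_inner :: "nat \<Rightarrow> cl \<Rightarrow> cl \<Rightarrow> real" where
  "cl_inner n a b = (\<Sum>S\<in>Pow {..n}. a S * b S)"

lemma cl_inner_commute: "cl_inner n a b = cl_inner n b a"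
  by (simp add: cl_inner_def mult.commute)

lemma cl_inner_tau: "cl_inner n (cl_tau a) (cl_tau b) = cl_inner n a b"
proof -
  have sign: "(-1) ^ k * a S * ((-1) ^ k * b S) = a S * (b S :: real)" for k S
    using neg_one_power_square[of k] by (simp add: algebra_simps)
  show ?thesis
    by (simp add: cl_inner_def cl_tau_def sign)
qed

lemma cl_inner_sum_left:
  "finite K \<Longrightarrow> cl_inner n (\<lambda>S. \<Sum>k\<in>K. f k S) b = (\<Sum>k\<in>K. cl_inner n (f k) b)"
  by (simp add: cl_inner_def sum_distrib_right sum.swap[of _ K])

lemma cl_inner_sum_right:
  "finite K \<Longrightarrow> cl_inner n a (\<lambda>S. \<Sum>k\<in>K. f k S) = (\<Sum>k\<in>K. cl_inner n a (f k))"
  by (simp add: cl_inner_def sum_distrib_left sum.swap[of _ K])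

lemma cl_inner_add_left: "cl_inner n (\<lambda>S. a S + a' S) b = cl_inner n a b + cl_inner n a' b"
  by (simp add: cl_inner_def algebra_simps sum.distrib)

lemma cl_inner_add_right: "cl_inner n a (\<lambda>S. b S + b' S) = cl_inner n a b + cl_inner n a b'"
  by (simp add: cl_inner_def algebra_simps sum.distrib)

lemma cl_inner_diff_right: "cl_inner n a (\<lambda>S. b S - b' S) = cl_inner n a b - cl_inner n a b'"
  by (simp add: cl_inner_def algebra_simps sum_subtractf)

lemma cl_inner_scale_left: "cl_inner n (\<lambda>S. r * a S) b = r * cl_inner n a b"
  by (simp add: cl_inner_def algebra_simps sum_distrib_left)

lemma cl_inner_scale_right: "cl_inner n a (\<lambda>S. r * b S) = r * cl_inner n a b"
  by (simp add: cl_inner_def algebra_simps sum_distrib_left)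

lemma cl_inner_zero_left: "cl_inner n (\<lambda>S. 0) b = 0"
  by (simp add: cl_inner_def)

lemma cl_inner_self_nonneg: "0 \<le> cl_inner n a a"
  unfolding cl_inner_def by (intro sum_nonneg) simp

lemma cl_inner_self_eq_0:
  assumes "a \<in> Cl n"
  shows "cl_inner n a a = 0 \<longleftrightarrow> a = (\<lambda>S. 0)"
proof
  assume "cl_inner n a a = 0"
  then have "\<forall>T\<in>Pow {..n}. a T * a T = 0"
    unfolding cl_inner_def by (subst sum_nonneg_eq_0_iff[symmetric]) auto
  then show "a = (\<lambda>S. 0)"
    using assms by (auto simp: Cl_def)
qed (simp add: cl_inner_def)

lemma cl_inner_gen_adjoint:
  assumes "i \<le> n"
  shows "cl_inner n (cl_mult n (cl_gen i) a) b = cl_inner n a (cl_mult n (cl_gen i) b)"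
proof -
  have sign: "cl_sign {i} (sym_diff {i} V) = cl_sign {i} V" for V
    by (simp add: cl_sign_def) (metis (no_types, lifting) Diff_iff UnCI lessI less_irrefl)
  have "cl_inner n (cl_mult n (cl_gen i) a) b
      = (\<Sum>U\<in>Pow {..n}. cl_sign {i} (sym_diff {i} U) * a (sym_diff {i} U) * b U)"
    unfolding cl_inner_def by (intro sum.cong refl) (simp add: cl_mult_gen_apply assms)
  also have "\<dots> = (\<Sum>V\<in>Pow {..n}. cl_sign {i} V * a V * b (sym_diff {i} V))"
    by (rule sum.reindex_bij_witness[of _ "sym_diff {i}" "sym_diff {i}"]) (use assms sign in auto)
  also have "\<dots> = cl_inner n a (cl_mult n (cl_gen i) b)"
    unfolding cl_inner_def by (intro sum.cong refl) (simp add: cl_mult_gen_apply assms sign)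
  finally show ?thesis .
qed

lemma cl_inner_vec_adjoint:
  "cl_inner n (cl_mult n (cl_vec n x) a) b = cl_inner n a (cl_mult n (cl_vec n x) b)"
proof -
  have "cl_mult n (cl_vec n x) y = (\<lambda>U. \<Sum>i\<le>n. x i * cl_mult n (cl_gen i) y U)" for y
    by (intro ext) (rule cl_mult_vec_left)
  then show ?thesis
    by (simp add: cl_inner_sum_left cl_inner_sum_right cl_inner_scale_left
        cl_inner_scale_right cl_inner_gen_adjoint)
qed

lemma cl_inner_eigenvectors_orthogonal:
  assumes "cl_mult n (cl_vec n x) a = (\<lambda>U. - a U)" "cl_mult n (cl_vec n x) b = b"
  shows "cl_inner n a b = 0"
proof -
  have "cl_inner n a b = - cl_inner n (cl_mult n (cl_vec n x) a) b"
    using cl_inner_scale_left[of n "-1" a b] by (simp add: assms(1))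
  also have "\<dots> = - cl_inner n a b"
    by (simp add: cl_inner_vec_adjoint assms(2))
  finally show ?thesis
    by simp
qed

lemma card_inversions_self:
  assumes "finite S"
  shows "card (inversions S S) = card S * (card S - 1) div 2"
proof -
  have "bij_betw (\<lambda>(s, t). {s, t}) (inversions S S) {B. B \<subseteq> S \<and> card B = 2}"
  proof (rule bij_betw_byWitness[where f' = "\<lambda>B. (Max B, Min B)"])
    show "\<forall>a\<in>inversions S S. (\<lambda>B. (Max B, Min B)) ((\<lambda>(s, t). {s, t}) a) = a"
      by (auto simp: inversions_def max_def min_def)
    show "\<forall>B\<in>{B. B \<subseteq> S \<and> card B = 2}. (\<lambda>(s, t). {s, t}) (Max B, Min B) = B"
      by (auto simp: card_2_iff max_def min_def split: if_splits)
    show "(\<lambda>(s, t). {s, t}) ` inversions S S \<subseteq> {B. B \<subseteq> S \<and> card B = 2}"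
      by (auto simp: inversions_def)
    show "(\<lambda>B. (Max B, Min B)) ` {B. B \<subseteq> S \<and> card B = 2} \<subseteq> inversions S S"
      by (auto simp: inversions_def card_2_iff max_def min_def)
  qed
  then have "card (inversions S S) = card S choose 2"
    using assms by (simp add: bij_betw_same_card n_subsets)
  then show ?thesis
    by (simp add: choose_two)
qed

lemma cl_tr_eq: "cl_tr n a = 2 ^ Suc n * a {}"
proof -
  have "cl_mult n a (cl_basis S) S = a {}" if S: "S \<in> Pow {..n}" for S
  proof -
    have "sym_diff R S = S \<longleftrightarrow> R = {}" for R
      by auto
    then have "cl_mult n a (cl_basis S) S = (\<Sum>R\<in>Pow {..n}. if R = {} then a R else 0)"
      using S unfolding cl_mult_apply[OF PowD[OF S]] cl_basis_def
      by (intro sum.cong) auto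
    then show ?thesis
      by simp
  qed
  then show ?thesis
    by (simp add: cl_tr_def card_Pow)
qed

text \<open>Reversion exactly undoes the sign of \<open>e\<^sub>S e\<^sub>S\<close>, so the trace form is a multiple of the
  inner product.\<close>

lemma cl_beta_eq_inner: "cl_beta n y z = 2 ^ Suc n * cl_inner n y z"
proof -
  have "cl_sign S S * cl_rev y S * z S = y S * z S" if "S \<in> Pow {..n}" for S
  proof -
    have "(-1::real) ^ (card S * (card S - 1) div 2) * cl_sign S S = 1"
      using finite_Pow_atMost[OF that]
      by (simp add: cl_sign_inversions card_inversions_self flip: power_add)
    then show ?thesis
      by (simp add: cl_rev_def mult_ac)
  qed
  then have "cl_mult n (cl_rev y) z {} = cl_inner n y z"
    unfolding cl_mult_apply[OF empty_subsetI] cl_inner_def by (intro sum.cong refl) simp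
  then show ?thesis
    by (simp add: cl_beta_def cl_tr_eq)
qed

definition cl_subspace :: "nat \<Rightarrow> cl set \<Rightarrow> bool" where
  "cl_subspace n E \<longleftrightarrow> E \<subseteq> Cl n \<and> (\<lambda>S. 0) \<in> E \<and> (\<forall>a\<in>E. \<forall>b\<in>E. (\<lambda>S. a S + b S) \<in> E)
     \<and> (\<forall>r. \<forall>a\<in>E. (\<lambda>S. r * a S) \<in> E)"

definition cl_left_ideal :: "nat \<Rightarrow> cl set \<Rightarrow> bool" where
  "cl_left_ideal n E \<longleftrightarrow> cl_subspace n E \<and> (\<forall>a\<in>Cl n. \<forall>y\<in>E. cl_mult n a y \<in> E)"

lemma cl_subspace_Cl: "cl_subspace n E \<Longrightarrow> a \<in> E \<Longrightarrow> a \<in> Cl n"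
  by (auto simp: cl_subspace_def)

lemma cl_subspace_add: "cl_subspace n E \<Longrightarrow> a \<in> E \<Longrightarrow> b \<in> E \<Longrightarrow> (\<lambda>S. a S + b S) \<in> E"
  by (simp add: cl_subspace_def)

lemma cl_subspace_scale: "cl_subspace n E \<Longrightarrow> a \<in> E \<Longrightarrow> (\<lambda>S. r * a S) \<in> E"
  by (simp add: cl_subspace_def)

lemma cl_subspace_diff:
  assumes "cl_subspace n E" "a \<in> E" "b \<in> E"
  shows "(\<lambda>S. a S - b S) \<in> E"
  using cl_subspace_add[OF assms(1,2) cl_subspace_scale[OF assms(1,3), of "-1"]] by simp

lemma cl_subspace_sum:
  assumes "cl_subspace n E" "finite K" "\<And>k. k \<in> K \<Longrightarrow> f k \<in> E"
  shows "(\<lambda>S. \<Sum>k\<in>K. f k S) \<in> E"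
  using assms(2,3)
  by (induction K rule: finite_induct)
    (use assms(1) in \<open>auto simp: cl_subspace_def intro: cl_subspace_add\<close>)

lemma cl_left_ideal_left_ideal: "cl_left_ideal n (left_ideal n p)"
proof -
  have closed: "cl_mult n a y \<in> left_ideal n p" if "y \<in> left_ideal n p" for a y
    using that cl_mult_in_Cl by (auto simp: left_ideal_def cl_mult_assoc)
  have "(\<lambda>S. 0) = cl_mult n (\<lambda>S. 0) p" "(\<lambda>S. 0) \<in> Cl n"
    by (simp_all add: cl_mult_zero_left Cl_def)
  then have "(\<lambda>S. 0) \<in> left_ideal n p"
    unfolding left_ideal_def by blast
  moreover have "(\<lambda>S. a S + b S) \<in> left_ideal n p" "(\<lambda>S. r * a S) \<in> left_ideal n p"
    if ab: "a \<in> left_ideal n p" "b \<in> left_ideal n p" for a b r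
  proof -
    obtain c d where "c \<in> Cl n" "a = cl_mult n c p" "d \<in> Cl n" "b = cl_mult n d p"
      using ab unfolding left_ideal_def by blast
    moreover have "(\<lambda>S. c S + d S) \<in> Cl n" "(\<lambda>S. r * c S) \<in> Cl n"
      using calculation by (auto simp: Cl_def)
    moreover have "(\<lambda>S. a S + b S) = cl_mult n (\<lambda>S. c S + d S) p"
      "(\<lambda>S. r * a S) = cl_mult n (\<lambda>S. r * c S) p"
      using calculation by (auto simp: cl_mult_add_left cl_mult_scale_left)
    ultimately show "(\<lambda>S. a S + b S) \<in> left_ideal n p" "(\<lambda>S. r * a S) \<in> left_ideal n p"
      unfolding left_ideal_def by blast+
  qed
  ultimately show ?thesis
    using closed cl_mult_in_Cl by (auto simp: cl_left_ideal_def cl_subspace_def left_ideal_def)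
qed

lemma cl_subspace_left_ideal: "cl_subspace n (left_ideal n p)"
  using cl_left_ideal_left_ideal by (simp add: cl_left_ideal_def)

lemma left_ideal_tau: "left_ideal n (cl_tau p) = cl_tau ` left_ideal n p"
proof
  show "left_ideal n (cl_tau p) \<subseteq> cl_tau ` left_ideal n p"
  proof
    fix y assume "y \<in> left_ideal n (cl_tau p)"
    then obtain c where "c \<in> Cl n" "y = cl_mult n c (cl_tau p)"
      by (auto simp: left_ideal_def)
    then have "cl_tau c \<in> Cl n" "y = cl_tau (cl_mult n (cl_tau c) p)"
      by (simp_all add: cl_tau_in_Cl cl_tau_mult)
    then show "y \<in> cl_tau ` left_ideal n p"
      unfolding left_ideal_def by blast
  qed
  show "cl_tau ` left_ideal n p \<subseteq> left_ideal n (cl_tau p)"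
    using cl_tau_in_Cl by (auto simp: left_ideal_def cl_tau_mult)
qed

lemma An_restrict: "p \<in> polyfun n \<Longrightarrow> (\<lambda>x. if x \<in> sph n then p x else 0) \<in> An n"
  unfolding An_def by blast

lemma An_outside: "f \<in> An n \<Longrightarrow> x \<notin> sph n \<Longrightarrow> f x = 0"
  by (auto simp: An_def)

lemma An_zero: "(\<lambda>x. 0) \<in> An n"
  using An_restrict[OF pf_const[of 0]] by simp

lemma An_add:
  assumes "f \<in> An n" "g \<in> An n"
  shows "(\<lambda>x. f x + g x) \<in> An n"
proof -
  obtain p q where "p \<in> polyfun n" "f = (\<lambda>x. if x \<in> sph n then p x else 0)"
    and "q \<in> polyfun n" "g = (\<lambda>x. if x \<in> sph n then q x else 0)"
    using assms by (auto simp: An_def)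
  then show ?thesis
    using An_restrict[OF pf_add[of p n q]] by (simp add: if_distrib if_distribR cong: if_cong)
qed

lemma An_polyfun_mult:
  assumes "p \<in> polyfun n" "f \<in> An n"
  shows "(\<lambda>x. p x * f x) \<in> An n"
proof -
  obtain q where "q \<in> polyfun n" "f = (\<lambda>x. if x \<in> sph n then q x else 0)"
    using assms(2) by (auto simp: An_def)
  then show ?thesis
    using An_restrict[OF pf_mult[OF assms(1)]] by (simp add: if_distrib cong: if_cong)
qed

lemma An_const_mult: "f \<in> An n \<Longrightarrow> (\<lambda>x. c * f x) \<in> An n"
  using An_polyfun_mult[OF pf_const] .

lemma An_coord_mult: "j \<le> n \<Longrightarrow> f \<in> An n \<Longrightarrow> (\<lambda>x. x j * f x) \<in> An n"
  using An_polyfun_mult[OF pf_var] .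

lemma An_sum: "finite K \<Longrightarrow> (\<And>k. k \<in> K \<Longrightarrow> f k \<in> An n) \<Longrightarrow> (\<lambda>x. \<Sum>k\<in>K. f k x) \<in> An n"
  by (induction K rule: finite_induct) (simp_all add: An_zero An_add)

lemma tensA_I:
  "(\<And>k. k < (m::nat) \<Longrightarrow> a k \<in> An n \<and> v k \<in> E) \<Longrightarrow> (\<lambda>x S. \<Sum>k<m. a k x * v k S) \<in> tensA n E"
  unfolding tensA_def by blast

lemma tensA_E:
  assumes "u \<in> tensA n E"
  obtains m :: nat and a v where "\<And>k. k < m \<Longrightarrow> a k \<in> An n" "\<And>k. k < m \<Longrightarrow> v k \<in> E"
    "u = (\<lambda>x S. \<Sum>k<m. a k x * v k S)"
  using assms unfolding tensA_def by blast

lemma tensA_zero: "(\<lambda>x S. 0) \<in> tensA n E"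
  using tensA_I[of 0 _ n _ E] by simp

lemma tensA_elem: "a \<in> An n \<Longrightarrow> v \<in> E \<Longrightarrow> (\<lambda>x S. a x * v S) \<in> tensA n E"
  using tensA_I[of 1 "\<lambda>_. a" n "\<lambda>_. v" E] by simp

lemma sum_lessThan_add: "(\<Sum>k<m + (m'::nat). f k) = (\<Sum>k<m. f k) + (\<Sum>k<m'. f (m + k))"
  by (induction m') (simp_all add: algebra_simps)

lemma tensA_add:
  assumes "u \<in> tensA n E" "u' \<in> tensA n E"
  shows "(\<lambda>x S. u x S + u' x S) \<in> tensA n E"
proof -
  obtain m :: nat and a v where a: "\<And>k. k < m \<Longrightarrow> a k \<in> An n" and v: "\<And>k. k < m \<Longrightarrow> v k \<in> E"
    and u: "u = (\<lambda>x S. \<Sum>k<m. a k x * v k S)"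
    using assms(1) by (elim tensA_E) blast
  obtain m' :: nat and a' v' where a': "\<And>k. k < m' \<Longrightarrow> a' k \<in> An n" and v': "\<And>k. k < m' \<Longrightarrow> v' k \<in> E"
    and u': "u' = (\<lambda>x S. \<Sum>k<m'. a' k x * v' k S)"
    using assms(2) by (elim tensA_E) blast
  define A where "A k = (if k < m then a k else a' (k - m))" for k
  define V where "V k = (if k < m then v k else v' (k - m))" for k
  have "(\<lambda>x S. \<Sum>k<m + m'. A k x * V k S) \<in> tensA n E"
    by (rule tensA_I) (auto simp: A_def V_def a v a' v')
  moreover have "(\<Sum>k<m + m'. A k x * V k S) = u x S + u' x S" for x S
    by (simp add: sum_lessThan_add u u' A_def V_def)
  ultimately show ?thesis
    by simp
qed

lemma tensA_sum:
  "finite K \<Longrightarrow> (\<And>k. k \<in> K \<Longrightarrow> f k \<in> tensA n E) \<Longrightarrow> (\<lambda>x S. \<Sum>k\<in>K. f k x S) \<in> tensA n E"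
  by (induction K rule: finite_induct) (simp_all add: tensA_zero tensA_add)

lemma tensA_coeff_mult:
  assumes "\<And>a. a \<in> An n \<Longrightarrow> (\<lambda>x. g x * a x) \<in> An n" and "u \<in> tensA n E"
  shows "(\<lambda>x S. g x * u x S) \<in> tensA n E"
proof -
  obtain m :: nat and a v where "\<And>k. k < m \<Longrightarrow> a k \<in> An n" "\<And>k. k < m \<Longrightarrow> v k \<in> E"
    and u: "u = (\<lambda>x S. \<Sum>k<m. a k x * v k S)"
    using assms(2) by (elim tensA_E) blast
  then have "(\<lambda>x S. \<Sum>k<m. (g x * a k x) * v k S) \<in> tensA n E"
    using assms(1) by (intro tensA_I) auto
  then show ?thesis
    by (simp add: u sum_distrib_left mult.assoc)
qed

lemma tensA_const_mult: "u \<in> tensA n E \<Longrightarrow> (\<lambda>x S. c * u x S) \<in> tensA n E"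
  by (rule tensA_coeff_mult[OF An_const_mult])

lemma tensA_diff:
  assumes "u \<in> tensA n E" "u' \<in> tensA n E"
  shows "(\<lambda>x S. u x S - u' x S) \<in> tensA n E"
  using tensA_add[OF assms(1) tensA_const_mult[OF assms(2), of "-1"]] by simp

lemma tensA_outside:
  assumes "u \<in> tensA n E" "x \<notin> sph n"
  shows "u x = (\<lambda>S. 0)"
proof -
  obtain m :: nat and a v where a: "\<And>k. k < m \<Longrightarrow> a k \<in> An n"
    and u: "u = (\<lambda>x S. \<Sum>k<m. a k x * v k S)"
    using assms(1) by (elim tensA_E) blast
  have "a k x = 0" if "k < m" for k
    using An_outside[OF a[OF that] assms(2)] .
  then show ?thesis
    by (simp add: u)
qed

lemma tensA_apply_mem:
  assumes "cl_subspace n E" "u \<in> tensA n E"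
  shows "u x \<in> E"
proof -
  obtain m :: nat and a v where "\<And>k. k < m \<Longrightarrow> v k \<in> E"
    and u: "u = (\<lambda>x S. \<Sum>k<m. a k x * v k S)"
    using assms(2) by (elim tensA_E) blast
  then show ?thesis
    using assms(1) by (auto intro: cl_subspace_sum simp: cl_subspace_def)
qed

lemma tensA_map:
  assumes "u \<in> tensA n E" and "\<And>v. v \<in> E \<Longrightarrow> L v \<in> E'"
    and linear: "\<And>(m::nat) c w. L (\<lambda>S. \<Sum>k<m. c k * w k S) = (\<lambda>S. \<Sum>k<m. c k * L (w k) S)"
  shows "(\<lambda>x. L (u x)) \<in> tensA n E'"
proof -
  obtain m :: nat and a v where "\<And>k. k < m \<Longrightarrow> a k \<in> An n" "\<And>k. k < m \<Longrightarrow> v k \<in> E"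
    and u: "u = (\<lambda>x S. \<Sum>k<m. a k x * v k S)"
    using assms(1) by (elim tensA_E) blast
  then have "(\<lambda>x S. \<Sum>k<m. a k x * L (v k) S) \<in> tensA n E'"
    using assms(2) by (intro tensA_I) auto
  then show ?thesis
    unfolding u linear .
qed

lemma tensA_tau: "u \<in> tensA n E \<Longrightarrow> (\<lambda>x. cl_tau (u x)) \<in> tensA n (cl_tau ` E)"
  by (rule tensA_map) (auto simp: cl_tau_linear)

lemma tensA_mult_vec:
  assumes "cl_left_ideal n E" "u \<in> tensA n E"
  shows "(\<lambda>x. cl_mult n (cl_vec n x) (u x)) \<in> tensA n E"
proof -
  have "(\<lambda>x. cl_mult n (cl_gen i) (u x)) \<in> tensA n E" if "i \<le> n" for i
  proof (rule tensA_map[OF assms(2)])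
    show "cl_mult n (cl_gen i) v \<in> E" if "v \<in> E" for v
      using assms(1) that \<open>i \<le> n\<close> by (auto simp: cl_left_ideal_def Cl_def cl_gen_def)
    show "cl_mult n (cl_gen i) (\<lambda>S. \<Sum>k<m. c k * w k S) = (\<lambda>S. \<Sum>k<m. c k * cl_mult n (cl_gen i) (w k) S)"
      for m :: nat and c w
      by (intro ext) (simp add: cl_mult_sum_right cl_mult_scale_right)
  qed
  then have "(\<lambda>x S. \<Sum>i\<le>n. x i * cl_mult n (cl_gen i) (u x) S) \<in> tensA n E"
    by (intro tensA_sum tensA_coeff_mult An_coord_mult) auto
  moreover have "(\<lambda>x. cl_mult n (cl_vec n x) (u x)) = (\<lambda>x S. \<Sum>i\<le>n. x i * cl_mult n (cl_gen i) (u x) S)"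
    by (intro ext) (rule cl_mult_vec_left)
  ultimately show ?thesis
    by simp
qed

lemma cl_inner_tensA:
  assumes "u \<in> tensA n E"
  shows "(\<lambda>x. cl_inner n q (u x)) \<in> An n"
proof -
  obtain m :: nat and a v where "\<And>k. k < m \<Longrightarrow> a k \<in> An n"
    and u: "u = (\<lambda>x S. \<Sum>k<m. a k x * v k S)"
    using assms by (elim tensA_E) blast
  then have "(\<lambda>x. \<Sum>k<m. cl_inner n q (v k) * a k x) \<in> An n"
    by (intro An_sum An_const_mult) auto
  then show ?thesis
    by (simp add: u cl_inner_sum_right cl_inner_scale_right mult.commute)
qed

section \<open>Orthonormal bases\<close>

definition lin_comb :: "nat \<Rightarrow> (nat \<Rightarrow> cl) \<Rightarrow> (nat \<Rightarrow> real) \<Rightarrow> cl" where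
  "lin_comb k f c = (\<lambda>S. \<Sum>j<k. c j * f j S)"

definition cl_span :: "nat \<Rightarrow> (nat \<Rightarrow> cl) \<Rightarrow> cl set" where
  "cl_span k f = range (lin_comb k f)"

definition orthonormal :: "nat \<Rightarrow> nat \<Rightarrow> (nat \<Rightarrow> cl) \<Rightarrow> bool" where
  "orthonormal n k q \<longleftrightarrow> (\<forall>i<k. \<forall>j<k. cl_inner n (q i) (q j) = (if i = j then 1 else 0))"

lemma lin_comb_cong: "(\<And>j. j < k \<Longrightarrow> f j = g j) \<Longrightarrow> lin_comb k f c = lin_comb k g c"
  unfolding lin_comb_def by (intro ext sum.cong) auto

lemma lin_comb_in_subspace:
  "cl_subspace n V \<Longrightarrow> (\<And>j. j < k \<Longrightarrow> f j \<in> V) \<Longrightarrow> lin_comb k f c \<in> V"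
  unfolding lin_comb_def by (rule cl_subspace_sum) (auto simp: cl_subspace_def)

lemma cl_inner_lin_comb_right: "cl_inner n a (lin_comb k f c) = (\<Sum>j<k. c j * cl_inner n a (f j))"
  unfolding lin_comb_def by (simp add: cl_inner_sum_right cl_inner_scale_right)

lemma cl_inner_lin_comb_orthonormal:
  "orthonormal n k q \<Longrightarrow> i < k \<Longrightarrow> cl_inner n (q i) (lin_comb k q c) = c i"
proof -
  assume "orthonormal n k q" "i < k"
  then have "(\<Sum>j<k. c j * cl_inner n (q i) (q j)) = (\<Sum>j<k. if j = i then c i else 0)"
    by (intro sum.cong) (auto simp: orthonormal_def)
  with \<open>i < k\<close> show ?thesis
    by (simp add: cl_inner_lin_comb_right)
qed

lemma in_cl_span_self:
  assumes "i < k"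
  shows "f i \<in> cl_span k f"
proof -
  have "(\<Sum>j<k. (if j = i then 1 else 0) * f j S) = (\<Sum>j<k. if j = i then f i S else 0)" for S
    by (intro sum.cong) auto
  then have "f i = lin_comb k f (\<lambda>j. if j = i then 1 else 0)"
    using assms by (simp add: lin_comb_def)
  then show ?thesis
    unfolding cl_span_def by blast
qed

lemma cl_span_mono: "k \<le> k' \<Longrightarrow> cl_span k f \<subseteq> cl_span k' f"
proof
  fix y assume "k \<le> k'" "y \<in> cl_span k f"
  then obtain c where "y = lin_comb k f c"
    by (auto simp: cl_span_def)
  also have "\<dots> = lin_comb k' f (\<lambda>j. if j < k then c j else 0)"
    unfolding lin_comb_def using \<open>k \<le> k'\<close> by (intro ext sum.mono_neutral_cong_left) auto
  finally show "y \<in> cl_span k' f"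
    unfolding cl_span_def by blast
qed

lemma lin_comb_in_cl_span:
  assumes "\<And>i. i < k \<Longrightarrow> g i \<in> cl_span m f"
  shows "lin_comb k g c \<in> cl_span m f"
proof -
  have "\<forall>i. \<exists>e. i < k \<longrightarrow> g i = lin_comb m f e"
    using assms unfolding cl_span_def by blast
  then obtain d where d: "\<And>i. i < k \<Longrightarrow> g i = lin_comb m f (d i)"
    by (metis choice)
  have "lin_comb k g c S = lin_comb m f (\<lambda>j. \<Sum>i<k. c i * d i j) S" for S
  proof -
    have "lin_comb k g c S = (\<Sum>i<k. \<Sum>j<m. c i * d i j * f j S)"
      unfolding lin_comb_def by (simp add: d lin_comb_def sum_distrib_left mult.assoc)
    also have "\<dots> = (\<Sum>j<m. \<Sum>i<k. c i * d i j * f j S)"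
      by (rule sum.swap)
    also have "\<dots> = lin_comb m f (\<lambda>j. \<Sum>i<k. c i * d i j) S"
      by (simp add: lin_comb_def sum_distrib_right)
    finally show ?thesis .
  qed
  then show ?thesis
    unfolding cl_span_def by blast
qed

lemma cl_span_subset: "(\<And>i. i < k \<Longrightarrow> g i \<in> cl_span m f) \<Longrightarrow> cl_span k g \<subseteq> cl_span m f"
  using lin_comb_in_cl_span by (auto simp: cl_span_def)

lemma cl_span_add: "y \<in> cl_span k f \<Longrightarrow> z \<in> cl_span k f \<Longrightarrow> (\<lambda>S. y S + z S) \<in> cl_span k f"
proof -
  assume "y \<in> cl_span k f" "z \<in> cl_span k f"
  then obtain c d where "y = lin_comb k f c" "z = lin_comb k f d"
    by (auto simp: cl_span_def)
  then have "(\<lambda>S. y S + z S) = lin_comb k f (\<lambda>j. c j + d j)"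
    by (simp add: lin_comb_def algebra_simps sum.distrib)
  then show ?thesis
    unfolding cl_span_def by blast
qed

lemma cl_span_scale: "y \<in> cl_span k f \<Longrightarrow> (\<lambda>S. r * y S) \<in> cl_span k f"
proof -
  assume "y \<in> cl_span k f"
  then obtain c where "y = lin_comb k f c"
    by (auto simp: cl_span_def)
  then have "(\<lambda>S. r * y S) = lin_comb k f (\<lambda>j. r * c j)"
    by (simp add: lin_comb_def sum_distrib_left mult.assoc)
  then show ?thesis
    unfolding cl_span_def by blast
qed

lemma orthonormal_extend:
  assumes "orthonormal n k q" "\<And>j. j < k \<Longrightarrow> cl_inner n (q j) r = 0" "cl_inner n r r = 1"
  shows "orthonormal n (Suc k) (q(k := r))"
  unfolding orthonormal_def
proof (intro allI impI)
  fix i j assume "i < Suc k" "j < Suc k"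
  then consider "i < k" "j < k" | "i < k" "j = k" | "i = k" "j < k" | "i = k" "j = k"
    by linarith
  then show "cl_inner n ((q(k := r)) i) ((q(k := r)) j) = (if i = j then 1 else 0)"
    using assms cl_inner_commute[of n r "q i" for i] by cases (auto simp: orthonormal_def)
qed

lemma independent_not_in_span:
  assumes indep: "\<And>c. lin_comb N b c = (\<lambda>S. 0) \<Longrightarrow> \<forall>i<N. c i = 0" and "k < N"
  shows "b k \<notin> cl_span k b"
proof
  assume "b k \<in> cl_span k b"
  then obtain c where c: "b k = lin_comb k b c"
    by (auto simp: cl_span_def)
  define \<gamma> where "\<gamma> j = (if j < k then c j else if j = k then -1 else 0)" for j
  have "lin_comb N b \<gamma> S = (\<Sum>j<Suc k. \<gamma> j * b j S)" for S
    unfolding lin_comb_def using \<open>k < N\<close> by (intro sum.mono_neutral_cong_right) (auto simp: \<gamma>_def)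
  also have "(\<Sum>j<Suc k. \<gamma> j * b j S) = 0" for S
    using fun_cong[OF c, of S] by (simp add: \<gamma>_def lin_comb_def)
  finally have "\<gamma> k = 0"
    using indep \<open>k < N\<close> by blast
  then show False
    by (simp add: \<gamma>_def)
qed

lemma cl_span_exchange:
  assumes span: "cl_span k q = cl_span k b" and "s \<noteq> 0"
    and b_k: "b k = (\<lambda>S. lin_comb k q c S + s * r S)"
  shows "cl_span (Suc k) (q(k := r)) = cl_span (Suc k) b"
proof
  have q_b: "q j \<in> cl_span (Suc k) b" if "j < k" for j
    using in_cl_span_self[OF that, of q] span cl_span_mono[of k "Suc k" b] by auto
  have "r = (\<lambda>S. (1 / s) * (b k S + (-1) * lin_comb k q c S))"
  proof
    fix S
    show "r S = (1 / s) * (b k S + (-1) * lin_comb k q c S)"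
      using fun_cong[OF b_k, of S] \<open>s \<noteq> 0\<close> by (simp add: field_simps)
  qed
  also have "\<dots> \<in> cl_span (Suc k) b"
    by (intro cl_span_scale cl_span_add in_cl_span_self lin_comb_in_cl_span q_b) auto
  finally show "cl_span (Suc k) (q(k := r)) \<subseteq> cl_span (Suc k) b"
    using q_b by (intro cl_span_subset) (auto simp: less_Suc_eq)
next
  have q_q': "cl_span k q \<subseteq> cl_span (Suc k) (q(k := r))"
    using cl_span_mono[of k "Suc k" "q(k := r)"] lin_comb_cong[of k q "q(k := r)"]
    by (auto simp: cl_span_def)
  then have "b j \<in> cl_span (Suc k) (q(k := r))" if "j < k" for j
    using in_cl_span_self[OF that, of b] span by auto
  moreover have "b k \<in> cl_span (Suc k) (q(k := r))"
    unfolding b_k using q_q' in_cl_span_self[of k "Suc k" "q(k := r)"]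
    by (intro cl_span_add cl_span_scale) (auto simp: cl_span_def)
  ultimately show "cl_span (Suc k) b \<subseteq> cl_span (Suc k) (q(k := r))"
    by (intro cl_span_subset) (auto simp: less_Suc_eq)
qed

lemma gram_schmidt_step:
  assumes V: "cl_subspace n V" and b_k: "b k \<in> V" "b k \<notin> cl_span k b"
    and q: "\<And>i. i < k \<Longrightarrow> q i \<in> V" and on: "orthonormal n k q" and span: "cl_span k q = cl_span k b"
  shows "\<exists>q'. (\<forall>i<Suc k. q' i \<in> V) \<and> orthonormal n (Suc k) q' \<and> cl_span (Suc k) q' = cl_span (Suc k) b"
proof -
  define \<alpha> where "\<alpha> j = cl_inner n (q j) (b k)" for j
  define r where "r = (\<lambda>S. b k S - lin_comb k q \<alpha> S)"
  have r_V: "r \<in> V"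
    unfolding r_def using V b_k(1) q by (intro cl_subspace_diff lin_comb_in_subspace) auto
  have "r \<noteq> (\<lambda>S. 0)"
  proof
    assume "r = (\<lambda>S. 0)"
    then have "b k = lin_comb k q \<alpha>"
      by (auto simp: r_def fun_eq_iff)
    then show False
      using b_k(2) span by (auto simp: cl_span_def)
  qed
  then have r_pos: "cl_inner n r r > 0"
    using cl_inner_self_eq_0[OF cl_subspace_Cl[OF V r_V]] cl_inner_self_nonneg[of n r] by auto
  define s where "s = sqrt (cl_inner n r r)"
  have s: "s > 0" "s * s = cl_inner n r r"
    using r_pos by (simp_all add: s_def)
  define e where "e = (\<lambda>S. (1 / s) * r S)"
  have "cl_inner n (q j) e = 0" if "j < k" for j
    using on that unfolding e_def
    by (simp only: cl_inner_scale_right) (simp add: r_def \<alpha>_def cl_inner_diff_right cl_inner_lin_comb_orthonormal)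
  moreover have "cl_inner n e e = 1"
    using s r_pos unfolding e_def by (simp only: cl_inner_scale_left cl_inner_scale_right) (simp add: field_simps)
  ultimately have "orthonormal n (Suc k) (q(k := e))"
    by (rule orthonormal_extend[OF on])
  moreover have "b k = (\<lambda>S. lin_comb k q \<alpha> S + s * e S)"
    using s by (simp add: e_def r_def fun_eq_iff)
  then have "cl_span (Suc k) (q(k := e)) = cl_span (Suc k) b"
    using span s by (intro cl_span_exchange) auto
  moreover have "e \<in> V"
    unfolding e_def by (rule cl_subspace_scale[OF V r_V])
  ultimately show ?thesis
    using q by (intro exI[of _ "q(k := e)"]) (auto simp: less_Suc_eq)
qed

lemma gram_schmidt:
  assumes V: "cl_subspace n V" and b: "\<And>i. i < N \<Longrightarrow> b i \<in> V"
    and indep: "\<And>c. lin_comb N b c = (\<lambda>S. 0) \<Longrightarrow> \<forall>i<N. c i = 0"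
  shows "k \<le> N \<Longrightarrow> \<exists>q. (\<forall>i<k. q i \<in> V) \<and> orthonormal n k q \<and> cl_span k q = cl_span k b"
proof (induction k)
  case 0
  show ?case
    by (simp add: orthonormal_def cl_span_def lin_comb_def)
next
  case (Suc k)
  then obtain q where "\<And>i. i < k \<Longrightarrow> q i \<in> V" "orthonormal n k q" "cl_span k q = cl_span k b"
    by auto
  moreover have "k < N"
    using Suc.prems by simp
  then have "b k \<in> V" "b k \<notin> cl_span k b"
    using b independent_not_in_span[of N b k] indep by auto
  ultimately show ?case
    using gram_schmidt_step[OF V, of b k q] by blast
qed

lemma orthonormal_basis_exists:
  assumes V: "cl_subspace n V" and dim: "has_real_dim V N"
  obtains q where "\<And>i. i < N \<Longrightarrow> q i \<in> V" "orthonormal n N q"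
    "\<And>v. v \<in> V \<Longrightarrow> v = lin_comb N q (\<lambda>i. cl_inner n (q i) v)"
proof -
  obtain b where b: "\<forall>i<N. b i \<in> V"
    and indep: "\<forall>c. (\<lambda>S. \<Sum>i<N. c i * b i S) = cl_zero \<longrightarrow> (\<forall>i<N. c i = 0)"
    and span: "\<forall>v\<in>V. \<exists>c. v = (\<lambda>S. \<Sum>i<N. c i * b i S)"
    using dim unfolding has_real_dim_def by blast
  obtain q where q: "\<forall>i<N. q i \<in> V" and on: "orthonormal n N q" and eq: "cl_span N q = cl_span N b"
    using gram_schmidt[OF V, of N b N] b indep by (auto simp: lin_comb_def cl_zero_def)
  have "v = lin_comb N q (\<lambda>i. cl_inner n (q i) v)" if "v \<in> V" for v
  proof -
    have "v \<in> cl_span N b"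
      using span that unfolding cl_span_def lin_comb_def by blast
    then have "v \<in> cl_span N q"
      by (simp add: eq)
    then obtain c where c: "v = lin_comb N q c"
      by (auto simp: cl_span_def)
    then have "cl_inner n (q i) v = c i" if "i < N" for i
      using cl_inner_lin_comb_orthonormal[OF on that] by simp
    then show ?thesis
      unfolding c lin_comb_def by (intro ext sum.cong) auto
  qed
  then show ?thesis
    using that q on by blast
qed

section \<open>The kernel of \<open>\<Phi>\<close>\<close>

lemma cl_mult_phi_at:
  assumes "y \<in> Cl n"
  shows "cl_mult n (phi_at n x) y = (\<lambda>U. 1/2 * (y U + cl_mult n (cl_vec n x) y U))"
proof
  fix U
  have "phi_at n x = (\<lambda>S. 1/2 * (cl_one S + cl_vec n x S))"
    by (simp add: phi_at_def cl_scale_def cl_vec_def)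
  then show "cl_mult n (phi_at n x) y U = 1/2 * (y U + cl_mult n (cl_vec n x) y U)"
    by (simp only: cl_mult_scale_left cl_mult_add_left cl_mult_one_left[OF assms])
qed

lemma Pker_iff:
  assumes "cl_subspace n E"
  shows "u \<in> Pker n E \<longleftrightarrow>
    u \<in> tensA n E \<and> (\<forall>x\<in>sph n. cl_mult n (cl_vec n x) (u x) = (\<lambda>U. - u x U))"
proof -
  have "Phi n u = (\<lambda>x. cl_zero) \<longleftrightarrow> (\<forall>x\<in>sph n. cl_mult n (cl_vec n x) (u x) = (\<lambda>U. - u x U))"
    if "u \<in> tensA n E"
  proof -
    have "u x \<in> Cl n" for x
      using cl_subspace_Cl[OF assms tensA_apply_mem[OF assms that]] .
    then have "Phi n u x = cl_zero \<longleftrightarrow> cl_mult n (cl_vec n x) (u x) = (\<lambda>U. - u x U)"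
      if "x \<in> sph n" for x
      using that by (auto simp: Phi_def cl_mult_phi_at cl_zero_def fun_eq_iff add_eq_0_iff)
    then show ?thesis
      by (auto simp: fun_eq_iff Phi_def cl_zero_def)
  qed
  then show ?thesis
    by (auto simp: Pker_def)
qed

lemma Pker_eigen:
  "cl_subspace n E \<Longrightarrow> u \<in> Pker n E \<Longrightarrow> x \<in> sph n \<Longrightarrow> cl_mult n (cl_vec n x) (u x) = (\<lambda>U. - u x U)"
  by (simp add: Pker_iff)

lemma Pker_tau_eigen:
  assumes "cl_subspace n E" "u \<in> Pker n E" "x \<in> sph n"
  shows "cl_mult n (cl_vec n x) (cl_tau (u x)) = cl_tau (u x)"
proof -
  have "cl_tau (cl_mult n (cl_vec n x) (u x)) = (\<lambda>U. - cl_tau (u x) U)"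
    using Pker_eigen[OF assms] by (simp add: cl_tau_def)
  then show ?thesis
    using cl_tau_mult_vec[of n x "u x"] by (auto simp: fun_eq_iff)
qed

lemma Pker_cross_orthogonal:
  assumes "cl_subspace n E" "cl_subspace n E'" "u \<in> Pker n E" "u' \<in> Pker n E'"
  shows "cl_inner n (u x) (cl_tau (u' x)) = 0"
proof (cases "x \<in> sph n")
  case True
  show ?thesis
    by (rule cl_inner_eigenvectors_orthogonal[OF Pker_eigen[OF assms(1,3) True]
          Pker_tau_eigen[OF assms(2,4) True]])
next
  case False
  have "u \<in> tensA n E"
    using assms(1,3) by (simp add: Pker_iff)
  then show ?thesis
    using tensA_outside[OF _ False] by (simp add: cl_inner_zero_left)
qed

lemma cl_mult_vec_involutive:
  "x \<in> sph n \<Longrightarrow> y \<in> Cl n \<Longrightarrow> cl_mult n (cl_vec n x) (cl_mult n (cl_vec n x) y) = y"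
  by (simp add: cl_mult_vec_vec sph_def)

lemma Pker_minus_part:
  assumes E: "cl_left_ideal n E" and t: "t \<in> tensA n E"
  shows "(\<lambda>x S. 1/2 * (t x S - cl_mult n (cl_vec n x) (t x) S)) \<in> Pker n E"
    (is "?u \<in> _")
proof -
  have sub: "cl_subspace n E"
    using E by (simp add: cl_left_ideal_def)
  have "?u \<in> tensA n E"
    using t tensA_mult_vec[OF E t] by (intro tensA_const_mult tensA_diff)
  moreover have "cl_mult n (cl_vec n x) (?u x) = (\<lambda>S. - ?u x S)" if "x \<in> sph n" for x
  proof
    fix S
    have "cl_mult n (cl_vec n x) (?u x) S
        = 1/2 * (cl_mult n (cl_vec n x) (t x) S - cl_mult n (cl_vec n x) (cl_mult n (cl_vec n x) (t x)) S)"
      by (simp only: cl_mult_scale_right cl_mult_diff_right)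
    also have "\<dots> = - ?u x S"
      using cl_mult_vec_involutive[OF that cl_subspace_Cl[OF sub tensA_apply_mem[OF sub t]]]
      by (simp add: field_simps)
    finally show "cl_mult n (cl_vec n x) (?u x) S = - ?u x S" .
  qed
  ultimately show ?thesis
    by (simp add: Pker_iff sub)
qed

lemma Pker_tau_plus_part:
  assumes t: "t \<in> tensA n (left_ideal n p)"
  shows "(\<lambda>x. cl_tau (\<lambda>S. 1/2 * (t x S + cl_mult n (cl_vec n x) (t x) S)))
    \<in> Pker n (left_ideal n (cl_tau p))"
proof -
  define s where "s x = (\<lambda>S. 1/2 * (t x S + cl_mult n (cl_vec n x) (t x) S))" for x
  have sub: "cl_subspace n (left_ideal n p)"
    using cl_left_ideal_left_ideal by (simp add: cl_left_ideal_def)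
  have "s \<in> tensA n (left_ideal n p)"
    unfolding s_def using t tensA_mult_vec[OF cl_left_ideal_left_ideal t]
    by (intro tensA_const_mult tensA_add)
  then have "(\<lambda>x. cl_tau (s x)) \<in> tensA n (left_ideal n (cl_tau p))"
    using tensA_tau by (simp add: left_ideal_tau)
  moreover have "cl_mult n (cl_vec n x) (cl_tau (s x)) = (\<lambda>U. - cl_tau (s x) U)" if "x \<in> sph n" for x
  proof -
    have s_eigen: "cl_mult n (cl_vec n x) (s x) = s x"
    proof
      fix S
      have "cl_mult n (cl_vec n x) (s x) S
          = 1/2 * (cl_mult n (cl_vec n x) (t x) S + cl_mult n (cl_vec n x) (cl_mult n (cl_vec n x) (t x)) S)"
        unfolding s_def by (simp only: cl_mult_scale_right cl_mult_add_right)
      also have "\<dots> = s x S"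
        using cl_mult_vec_involutive[OF that cl_subspace_Cl[OF sub tensA_apply_mem[OF sub t]]]
        by (simp add: s_def field_simps)
      finally show "cl_mult n (cl_vec n x) (s x) S = s x S" .
    qed
    have "cl_tau (s x) U = - cl_mult n (cl_vec n x) (cl_tau (s x)) U" for U
      using fun_cong[OF cl_tau_mult_vec[of n x "s x"], of U] by (simp add: s_eigen)
    then show ?thesis
      by (simp add: fun_eq_iff)
  qed
  ultimately show ?thesis
    by (simp add: Pker_iff cl_subspace_left_ideal s_def)
qed

section \<open>The isometry with the trivial form\<close>

definition glue :: "sec \<times> sec \<Rightarrow> (nat \<Rightarrow> real) \<Rightarrow> cl" where
  "glue z x = (\<lambda>S. fst z x S + cl_tau (snd z x) S)"

locale ideal_orthonormal_basis =
  fixes n :: nat and p :: cl and N :: nat and q :: "nat \<Rightarrow> cl"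
  assumes q_mem: "\<And>i. i < N \<Longrightarrow> q i \<in> left_ideal n p"
    and q_orthonormal: "orthonormal n N q"
    and q_expansion: "\<And>v. v \<in> left_ideal n p \<Longrightarrow> v = lin_comb N q (\<lambda>i. cl_inner n (q i) v)"
begin

abbreviation kernel_pairs :: "(sec \<times> sec) set" where
  "kernel_pairs \<equiv> Pker n (left_ideal n p) \<times> Pker n (left_ideal n (cl_tau p))"

definition psi :: "sec \<times> sec \<Rightarrow> nat \<Rightarrow> (nat \<Rightarrow> real) \<Rightarrow> real" where
  "psi z = (\<lambda>i x. if i < N then sqrt (2 ^ Suc n) * cl_inner n (q i) (glue z x) else 0)"

lemma parseval:
  assumes "Y \<in> left_ideal n p"
  shows "cl_inner n Y Y' = (\<Sum>i<N. cl_inner n (q i) Y * cl_inner n (q i) Y')"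
proof -
  have "cl_inner n Y Y' = cl_inner n Y' (lin_comb N q (\<lambda>i. cl_inner n (q i) Y))"
    using cl_inner_commute q_expansion[OF assms] by metis
  then show ?thesis
    by (simp add: cl_inner_lin_comb_right cl_inner_commute[of n Y'])
qed

lemma kernel_pairs_tensA:
  assumes "z \<in> kernel_pairs"
  shows "fst z \<in> tensA n (left_ideal n p)" "snd z \<in> tensA n (left_ideal n (cl_tau p))"
  using assms by (auto simp: Pker_iff cl_subspace_left_ideal)

lemma glue_mem:
  assumes "z \<in> kernel_pairs"
  shows "glue z x \<in> left_ideal n p"
proof -
  have "fst z x \<in> left_ideal n p"
    using tensA_apply_mem[OF cl_subspace_left_ideal kernel_pairs_tensA(1)[OF assms]] .
  moreover have "snd z x \<in> cl_tau ` left_ideal n p"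
    using tensA_apply_mem[OF cl_subspace_left_ideal kernel_pairs_tensA(2)[OF assms]]
    by (simp add: left_ideal_tau)
  then have "cl_tau (snd z x) \<in> left_ideal n p"
    by auto
  ultimately show ?thesis
    unfolding glue_def by (rule cl_subspace_add[OF cl_subspace_left_ideal])
qed

lemma glue_split:
  assumes "z \<in> kernel_pairs" "x \<in> sph n"
  shows "fst z x = (\<lambda>S. (glue z x S - cl_mult n (cl_vec n x) (glue z x) S) / 2)"
    and "cl_tau (snd z x) = (\<lambda>S. (glue z x S + cl_mult n (cl_vec n x) (glue z x) S) / 2)"
proof -
  have "cl_mult n (cl_vec n x) (glue z x) S = - fst z x S + cl_tau (snd z x) S" for S
    using Pker_eigen[OF cl_subspace_left_ideal _ assms(2), of "fst z"]
      Pker_tau_eigen[OF cl_subspace_left_ideal _ assms(2), of "snd z"] assms(1)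
    by (auto simp: glue_def cl_mult_add_right)
  then show "fst z x = (\<lambda>S. (glue z x S - cl_mult n (cl_vec n x) (glue z x) S) / 2)"
    and "cl_tau (snd z x) = (\<lambda>S. (glue z x S + cl_mult n (cl_vec n x) (glue z x) S) / 2)"
    by (auto simp: glue_def)
qed

lemma psi_An_pow:
  assumes "z \<in> kernel_pairs"
  shows "psi z \<in> An_pow n N"
proof -
  have "(\<lambda>x. cl_tau (snd z x)) \<in> tensA n (left_ideal n p)"
    using tensA_tau[OF kernel_pairs_tensA(2)[OF assms]] by (simp add: left_ideal_tau image_image)
  then have "(\<lambda>x. cl_inner n (q i) (glue z x)) \<in> An n" for i
    using An_add[OF cl_inner_tensA[OF kernel_pairs_tensA(1)[OF assms]] cl_inner_tensA]
    by (simp add: glue_def cl_inner_add_right)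
  then show ?thesis
    by (auto simp: An_pow_def psi_def An_const_mult)
qed

lemma psi_add:
  "psi ((\<lambda>x. cl_add (fst z x) (fst z' x)), (\<lambda>x. cl_add (snd z x) (snd z' x)))
     = (\<lambda>i x. psi z i x + psi z' i x)"
proof -
  have glue_add: "glue ((\<lambda>x. cl_add (fst z x) (fst z' x)), (\<lambda>x. cl_add (snd z x) (snd z' x))) x
      = (\<lambda>S. glue z x S + glue z' x S)" for x
    by (simp add: glue_def cl_add_def cl_tau_def algebra_simps)
  show ?thesis
    by (simp add: psi_def glue_add cl_inner_add_right algebra_simps fun_eq_iff)
qed

lemma psi_scale:
  "psi ((\<lambda>x. cl_scale (a x) (fst z x)), (\<lambda>x. cl_scale (a x) (snd z x)))
     = (\<lambda>i x. a x * psi z i x)"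
proof -
  have glue_scale: "glue ((\<lambda>x. cl_scale (a x) (fst z x)), (\<lambda>x. cl_scale (a x) (snd z x))) x
      = (\<lambda>S. a x * glue z x S)" for x
    by (simp add: glue_def cl_scale_def cl_tau_def algebra_simps)
  show ?thesis
    by (simp add: psi_def glue_scale cl_inner_scale_right fun_eq_iff)
qed

lemma psi_inj: "inj_on psi kernel_pairs"
proof (rule inj_onI)
  fix z z' assume z: "z \<in> kernel_pairs" and z': "z' \<in> kernel_pairs" and eq: "psi z = psi z'"
  have glue_eq: "glue z x = glue z' x" for x
  proof -
    have "cl_inner n (q i) (glue z x) = cl_inner n (q i) (glue z' x)" if "i < N" for i
      using fun_cong[OF fun_cong[OF eq, of i], of x] that by (simp add: psi_def)
    then have "lin_comb N q (\<lambda>i. cl_inner n (q i) (glue z x))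
        = lin_comb N q (\<lambda>i. cl_inner n (q i) (glue z' x))"
      unfolding lin_comb_def by (intro ext sum.cong) auto
    then show ?thesis
      using q_expansion[OF glue_mem[OF z]] q_expansion[OF glue_mem[OF z']] by simp
  qed
  have "fst z x = fst z' x \<and> snd z x = snd z' x" for x
  proof (cases "x \<in> sph n")
    case True
    have "cl_tau (snd z x) = cl_tau (snd z' x)"
      using glue_split(2)[OF z True] glue_split(2)[OF z' True] glue_eq by simp
    then have "cl_tau (cl_tau (snd z x)) = cl_tau (cl_tau (snd z' x))"
      by (rule arg_cong)
    then show ?thesis
      using glue_split(1)[OF z True] glue_split(1)[OF z' True] glue_eq by simp
  next
    case False
    then show ?thesis
      using tensA_outside[OF _ False] kernel_pairs_tensA[OF z] kernel_pairs_tensA[OF z'] by simp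
  qed
  then show "z = z'"
    by (simp add: prod_eq_iff fun_eq_iff)
qed

lemma psi_surj:
  assumes v: "v \<in> An_pow n N"
  shows "\<exists>z\<in>kernel_pairs. psi z = v"
proof -
  define c where "c = sqrt (2 ^ Suc n)"
  define t where "t x = lin_comb N q (\<lambda>i. 1 / c * v i x)" for x
  define z where "z = ((\<lambda>x S. 1/2 * (t x S - cl_mult n (cl_vec n x) (t x) S)),
    (\<lambda>x. cl_tau (\<lambda>S. 1/2 * (t x S + cl_mult n (cl_vec n x) (t x) S))))"
  have "t \<in> tensA n (left_ideal n p)"
    unfolding t_def lin_comb_def using v q_mem
    by (intro tensA_sum tensA_elem An_const_mult) (auto simp: An_pow_def)
  then have "z \<in> kernel_pairs"
    unfolding z_def using Pker_minus_part[OF cl_left_ideal_left_ideal] Pker_tau_plus_part by simp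
  moreover have "psi z = v"
  proof (intro ext)
    fix i x
    have "glue z x = t x"
      by (simp add: glue_def z_def fun_eq_iff field_simps)
    then show "psi z i x = v i x"
      using v cl_inner_lin_comb_orthonormal[OF q_orthonormal]
      by (auto simp: psi_def t_def c_def An_pow_def)
  qed
  ultimately show ?thesis
    by blast
qed

lemma psi_form:
  assumes z: "z \<in> kernel_pairs" and z': "z' \<in> kernel_pairs"
  shows "(\<lambda>x. betahat n (fst z) (fst z') x + betahat n (snd z) (snd z') x)
       = (\<lambda>x. \<Sum>i<N. psi z i x * psi z' i x)"
proof
  fix x
  have cross: "cl_inner n (fst z x) (cl_tau (snd z' x)) = 0" "cl_inner n (cl_tau (snd z x)) (fst z' x) = 0"
    using Pker_cross_orthogonal[OF cl_subspace_left_ideal cl_subspace_left_ideal] z z'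
    by (auto simp: cl_inner_commute[of n "cl_tau _"])
  have "(\<Sum>i<N. psi z i x * psi z' i x)
      = 2 ^ Suc n * (\<Sum>i<N. cl_inner n (q i) (glue z x) * cl_inner n (q i) (glue z' x))"
    by (simp add: psi_def sum_distrib_left algebra_simps)
  also have "\<dots> = 2 ^ Suc n * cl_inner n (glue z x) (glue z' x)"
    by (simp add: parseval[OF glue_mem[OF z]])
  also have "cl_inner n (glue z x) (glue z' x)
      = cl_inner n (fst z x) (fst z' x) + cl_inner n (snd z x) (snd z' x)"
    by (simp add: glue_def cl_inner_add_left cl_inner_add_right cl_inner_tau cross)
  finally show "betahat n (fst z) (fst z') x + betahat n (snd z) (snd z') x
      = (\<Sum>i<N. psi z i x * psi z' i x)"
    by (simp add: betahat_def cl_beta_eq_inner algebra_simps)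
qed

theorem isometric_trivial:
  "orth_sum_isometric_trivial n (Pker n (left_ideal n p)) (Pker n (left_ideal n (cl_tau p))) N"
proof -
  have "bij_betw psi kernel_pairs (An_pow n N)"
    unfolding bij_betw_def using psi_inj psi_An_pow psi_surj by fast
  then show ?thesis
    unfolding orth_sum_isometric_trivial_def using psi_add psi_scale psi_form by blast
qed

end

theorem mainTheorem9:
  fixes n N :: nat and p :: cl
  assumes "n mod 4 = 0" and "n \<ge> 4"
    and "primitive_idem n p"
    and "p \<in> left_ideal n (hbar_plus n)"
    and "has_real_dim (left_ideal n p) N"
  shows "orth_sum_isometric_trivial n
           (Pker n (left_ideal n p)) (Pker n (left_ideal n (cl_tau p))) N"
proof -
  obtain q where "\<And>i. i < N \<Longrightarrow> q i \<in> left_ideal n p" "orthonormal n N q"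
    "\<And>v. v \<in> left_ideal n p \<Longrightarrow> v = lin_comb N q (\<lambda>i. cl_inner n (q i) v)"
    using orthonormal_basis_exists[OF cl_subspace_left_ideal assms(5)] by blast
  then interpret ideal_orthonormal_basis n p N q
    by unfold_locales
  show ?thesis
    by (rule isometric_trivial)
qed

end
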